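(* Let $n\ge1$, $a_{i0}\ge0$, $a_{ij}\ge 0$ and $\pi_i>0$ for $i,j=1,\ldots,n$. For $u\in(0,\infty)^n$ define the matrices $A(u),H(u)\in\mathbb{R}^{n\times n}$ by $$A_{ij}(u)=\delta_{ij}a_{i0}+\delta_{ij}\sum_{k=1}^na_{ik}u_k+a_{ij}u_i,\qquad H_{ij}(u)=\delta_{ij}\pi_iu_i^{-2}.$$ Then for all $z\in\mathbb{R}^n$ and $u\in(0,\infty)^n$, $$z^TH(u)A(u)z\ge\sum_{i=1}^n\pi_ia_{i0}\frac{z_i^2}{u_i^2}+\frac14\sum_{i=1}^n\Big(8\pi_ia_{ii}-\sum_{j=1,\,j\ne i}^n\pi_ja_{ji}\Big)\frac{z_i^2}{u_i}.$$
   Context: $\delta_{ij}$ is the Kronecker symbol. $H(u)$ is the Hessian of $h(u)=\sum_i\pi_i(u_i-\log u_i)$. *)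

theory Defs
  imports "HOL-Analysis.Analysis"
begin

definition kron :: "'n \<Rightarrow> 'n \<Rightarrow> real" where
  "kron i j = (if i = j then 1 else 0)"

definition Amat :: "real ^ 'n \<Rightarrow> real ^ 'n ^ 'n \<Rightarrow> real ^ 'n \<Rightarrow> real ^ 'n ^ 'n" where
  "Amat a0 a u = (\<chi> i j. kron i j * a0 $ i + kron i j * (\<Sum>k\<in>UNIV. a $ i $ k * u $ k)
                       + a $ i $ j * u $ i)"

text \<open>H(u)_ij = delta_ij pi_i u_i^(-2), the Hessian of h(u) = sum_i pi_i (u_i - log u_i).\<close>
definition Hmat :: "real ^ 'n \<Rightarrow> real ^ 'n \<Rightarrow> real ^ 'n ^ 'n" where
  "Hmat p u = (\<chi> i j. kron i j * p $ i / (u $ i)\<^sup>2)"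

end

theory Submission
  imports Defs
begin

text \<open>
  Expanding, \<open>z\<^sup>T H(u) A(u) z\<close> is the \<open>a\<^sub>i\<^sub>0\<close> part, plus the diagonal part
  \<open>2 \<pi>\<^sub>i a\<^sub>i\<^sub>i z\<^sub>i\<^sup>2/u\<^sub>i\<close>, plus for every \<open>i \<noteq> j\<close> the cross term
  \<open>\<pi>\<^sub>i a\<^sub>i\<^sub>j (u\<^sub>j z\<^sub>i\<^sup>2/u\<^sub>i\<^sup>2 + z\<^sub>i z\<^sub>j/u\<^sub>i)\<close>. Completing the square in \<open>z\<^sub>i/u\<^sub>i\<close> bounds
  each cross term below by \<open>-\<pi>\<^sub>i a\<^sub>i\<^sub>j z\<^sub>j\<^sup>2/(4 u\<^sub>j)\<close>; summing over \<open>i \<noteq> j\<close>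
  charges these losses to the diagonal entry of \<open>j\<close>.
\<close>

lemma kron_sum_left: "(\<Sum>k\<in>UNIV. kron (i :: 'n :: finite) k * f k) = f i"
  by (simp add: kron_def of_bool_def[symmetric])

lemma Hmat_mult_vec_nth: "(Hmat p u *v w) $ i = p $ i / (u $ i)\<^sup>2 * w $ i"
  using kron_sum_left[of i "\<lambda>k. p $ i / (u $ i)\<^sup>2 * w $ k"]
  by (simp add: Hmat_def matrix_vector_mult_def mult.assoc)

lemma Amat_mult_vec_nth:
  "(Amat a0 a u *v z) $ i
     = (a0 $ i + (\<Sum>k\<in>UNIV. a $ i $ k * u $ k)) * z $ i + u $ i * (\<Sum>j\<in>UNIV. a $ i $ j * z $ j)"
  using kron_sum_left[of i "\<lambda>j. (a0 $ i + (\<Sum>k\<in>UNIV. a $ i $ k * u $ k)) * z $ j"]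
  by (simp add: Amat_def matrix_vector_mult_def algebra_simps sum.distrib sum_distrib_left)

lemma quadratic_form_Hmat_Amat:
  assumes "\<And>i. u $ i \<noteq> 0"
  shows "z \<bullet> ((Hmat p u ** Amat a0 a u) *v z)
    = (\<Sum>i\<in>UNIV. p $ i * a0 $ i * (z $ i)\<^sup>2 / (u $ i)\<^sup>2)
      + (\<Sum>i\<in>UNIV. 2 * p $ i * a $ i $ i * (z $ i)\<^sup>2 / u $ i)
      + (\<Sum>i\<in>UNIV. \<Sum>j\<in>UNIV - {i}.
           p $ i * a $ i $ j * (u $ j * (z $ i)\<^sup>2 / (u $ i)\<^sup>2 + z $ i * z $ j / u $ i))"
proof -
  define cross where
    "cross i j = p $ i * a $ i $ j * (u $ j * (z $ i)\<^sup>2 / (u $ i)\<^sup>2 + z $ i * z $ j / u $ i)"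
    for i j
  have row: "z $ i * (p $ i / (u $ i)\<^sup>2 * (Amat a0 a u *v z) $ i)
      = p $ i * a0 $ i * (z $ i)\<^sup>2 / (u $ i)\<^sup>2 + (\<Sum>j\<in>UNIV. cross i j)" for i
  proof -
    have "z $ i * (p $ i / (u $ i)\<^sup>2 * (Amat a0 a u *v z) $ i)
        = p $ i * a0 $ i * (z $ i)\<^sup>2 / (u $ i)\<^sup>2
          + (\<Sum>j\<in>UNIV. p $ i * (z $ i)\<^sup>2 / (u $ i)\<^sup>2 * (a $ i $ j * u $ j))
          + (\<Sum>j\<in>UNIV. p $ i * z $ i * u $ i / (u $ i)\<^sup>2 * (a $ i $ j * z $ j))"
      unfolding Amat_mult_vec_nth sum_distrib_left[symmetric]
      by (simp add: algebra_simps power2_eq_square)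
    also have "\<dots> = p $ i * a0 $ i * (z $ i)\<^sup>2 / (u $ i)\<^sup>2 + (\<Sum>j\<in>UNIV. cross i j)"
      using assms[of i] unfolding cross_def
      by (simp add: add.assoc sum.distrib[symmetric], intro sum.cong)
        (simp_all add: field_simps power2_eq_square)
    finally show ?thesis .
  qed
  have diagonal: "cross i i = 2 * p $ i * a $ i $ i * (z $ i)\<^sup>2 / u $ i" for i
    using assms[of i] by (simp add: cross_def field_simps power2_eq_square)
  have "z \<bullet> ((Hmat p u ** Amat a0 a u) *v z)
      = (\<Sum>i\<in>UNIV. z $ i * (p $ i / (u $ i)\<^sup>2 * (Amat a0 a u *v z) $ i))"
    by (simp add: inner_vec_def matrix_vector_mul_assoc[symmetric] Hmat_mult_vec_nth)
  also have "\<dots> = (\<Sum>i\<in>UNIV. p $ i * a0 $ i * (z $ i)\<^sup>2 / (u $ i)\<^sup>2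
      + cross i i + (\<Sum>j\<in>UNIV - {i}. cross i j))"
  proof (rule sum.cong[OF refl])
    fix i
    show "z $ i * (p $ i / (u $ i)\<^sup>2 * (Amat a0 a u *v z) $ i)
        = p $ i * a0 $ i * (z $ i)\<^sup>2 / (u $ i)\<^sup>2 + cross i i + (\<Sum>j\<in>UNIV - {i}. cross i j)"
      unfolding row using sum.remove[of UNIV i "cross i"] by simp
  qed
  finally show ?thesis
    by (simp add: sum.distrib diagonal cross_def)
qed

lemma sum_off_diagonal_swap:
  "(\<Sum>i\<in>UNIV. \<Sum>j\<in>UNIV - {i}. g i j) = (\<Sum>j\<in>UNIV. \<Sum>i\<in>UNIV - {j}. g i (j :: 'n :: finite))"
proof -
  have "(\<Sum>i\<in>UNIV. \<Sum>j\<in>{j \<in> UNIV. j \<noteq> i}. g i j)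
      = (\<Sum>j\<in>UNIV. \<Sum>i\<in>{i \<in> UNIV. j \<noteq> i}. g i j)"
    by (rule sum.swap_restrict) simp_all
  moreover have "{j \<in> UNIV. j \<noteq> i} = UNIV - {i}" "{i \<in> UNIV. j \<noteq> i} = UNIV - {j}"
    for i j :: 'n
    by auto
  ultimately show ?thesis
    by simp
qed

lemma cross_term_lower_bound:
  fixes c x y s t :: real
  assumes "c \<ge> 0" "s \<noteq> 0" "t > 0"
  shows "c * (t * x\<^sup>2 / s\<^sup>2 + x * y / s) \<ge> - (c * y\<^sup>2 / (4 * t))"
proof -
  have "0 \<le> c * (t * x / s + y / 2)\<^sup>2 / t"
    using assms by simp
  also have "\<dots> = c * (t * x\<^sup>2 / s\<^sup>2 + x * y / s) + c * y\<^sup>2 / (4 * t)"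
    using assms by (simp add: field_simps power2_eq_square)
  finally show ?thesis
    by simp
qed

lemma off_diagonal_cross_terms_ge:
  fixes p u z :: "real ^ 'n" and a :: "real ^ 'n ^ 'n"
  assumes "\<And>i. p $ i \<ge> 0" "\<And>i j. a $ i $ j \<ge> 0" "\<And>i. u $ i > 0"
  shows "(\<Sum>i\<in>UNIV. \<Sum>j\<in>UNIV - {i}.
           p $ i * a $ i $ j * (u $ j * (z $ i)\<^sup>2 / (u $ i)\<^sup>2 + z $ i * z $ j / u $ i))
         \<ge> - (1/4) * (\<Sum>j\<in>UNIV. (\<Sum>i\<in>UNIV - {j}. p $ i * a $ i $ j) * (z $ j)\<^sup>2 / u $ j)"
proof -
  have "- (1/4) * (\<Sum>j\<in>UNIV. (\<Sum>i\<in>UNIV - {j}. p $ i * a $ i $ j) * (z $ j)\<^sup>2 / u $ j)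
      = (\<Sum>j\<in>UNIV. \<Sum>i\<in>UNIV - {j}. - (p $ i * a $ i $ j * (z $ j)\<^sup>2 / (4 * u $ j)))"
    by (simp add: sum_distrib_left sum_distrib_right sum_divide_distrib sum_negf)
  also have "\<dots> = (\<Sum>i\<in>UNIV. \<Sum>j\<in>UNIV - {i}. - (p $ i * a $ i $ j * (z $ j)\<^sup>2 / (4 * u $ j)))"
    by (rule sum_off_diagonal_swap[symmetric])
  also have "\<dots> \<le> (\<Sum>i\<in>UNIV. \<Sum>j\<in>UNIV - {i}.
           p $ i * a $ i $ j * (u $ j * (z $ i)\<^sup>2 / (u $ i)\<^sup>2 + z $ i * z $ j / u $ i))"
    using assms by (intro sum_mono cross_term_lower_bound) (auto simp: less_imp_neq[symmetric])
  finally show ?thesis .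
qed

theorem lemma3:
  fixes a0 :: "real ^ 'n" and a :: "real ^ 'n ^ 'n" and p :: "real ^ 'n"
    and z u :: "real ^ 'n"
  assumes a0_nonneg: "\<And>i. a0 $ i \<ge> 0"
    and a_nonneg: "\<And>i j. a $ i $ j \<ge> 0"
    and p_pos: "\<And>i. p $ i > 0"
    and u_pos: "\<And>i. u $ i > 0"
  shows "z \<bullet> ((Hmat p u ** Amat a0 a u) *v z)
         \<ge> (\<Sum>i\<in>UNIV. p $ i * a0 $ i * (z $ i)\<^sup>2 / (u $ i)\<^sup>2)
           + 1/4 * (\<Sum>i\<in>UNIV. (8 * p $ i * a $ i $ i
                  - (\<Sum>j\<in>UNIV - {i}. p $ j * a $ j $ i)) * (z $ i)\<^sup>2 / u $ i)"
proof -
  \<comment> \<open>The \<open>a0\<close> terms agree on both sides.\<close>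
  have u_nz: "u $ i \<noteq> 0" for i
    using u_pos[of i] by simp
  have "1/4 * (\<Sum>i\<in>UNIV. (8 * p $ i * a $ i $ i - (\<Sum>j\<in>UNIV - {i}. p $ j * a $ j $ i))
                 * (z $ i)\<^sup>2 / u $ i)
      = (\<Sum>i\<in>UNIV. 2 * p $ i * a $ i $ i * (z $ i)\<^sup>2 / u $ i)
        - 1/4 * (\<Sum>i\<in>UNIV. (\<Sum>j\<in>UNIV - {i}. p $ j * a $ j $ i) * (z $ i)\<^sup>2 / u $ i)"
    by (simp add: sum_distrib_left sum_subtractf[symmetric] algebra_simps diff_divide_distrib)
  with off_diagonal_cross_terms_ge[OF less_imp_le[OF p_pos] a_nonneg u_pos, of z] show ?thesis
    unfolding quadratic_form_Hmat_Amat[OF u_nz] by linarith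
qed

end
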